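(* Let $n\ge 1$, $k>0$ and $\nu>0$. On the Siegel--Jacobi upper half space $\mathcal{X}^J_n=\{(v,u): v\in M(n,\mathbb{C}),\ v=v^t,\ \Im v>0,\ u\in M(1,n,\mathbb{C})\}$ let $\omega_{\mathcal{X}^J_n}$ be the two-form (the image under the partial Cayley transform of the invariant Kähler two-form of the Siegel--Jacobi ball $\mathcal{D}^J_n$) given by $$-\mathrm{i}\,\omega_{\mathcal{X}^J_n}(v,u)=\frac{k}{2}\operatorname{tr}(H\wedge\bar H)+\frac{2\nu}{\mathrm{i}}\operatorname{tr}(G^tD\wedge\bar G),\qquad D:=(\bar v-v)^{-1},\quad H:=D\,\mathrm{d}v,\quad G^t:=\mathrm{d}u-p\,\mathrm{d}v,$$ where $p:=(u-\bar u)(v-\bar v)^{-1}\in M(1,n,\mathbb{R})$. Introduce real coordinates $(x,y,p,q)$ by $v=x+\mathrm{i}y$ with $x,y$ real symmetric $n\times n$ matrices, $y$ positive definite, and $u=pv+q$ with $p,q\in M(1,n,\mathbb{R})$ (so that $G^t=\mathrm{d}p\,(x+\mathrm{i}y)+\mathrm{d}q$). Then $$\omega_{\mathcal{X}^J_n}(x,y,p,q)=\omega_1+\omega_2,$$ where $$\omega_1=\frac{k}{4}\operatorname{tr}\big(y^{-1}\mathrm{d}x\wedge y^{-1}\mathrm{d}y\big)=-\frac{k}{4}\operatorname{tr}\big(\mathrm{d}x\wedge \mathrm{d}(y^{-1})\big),\qquad \omega_2=2\nu\,\mathrm{d}q^t\wedge\mathrm{d}p=\sum_{i=1}^n \mathrm{d}(2\nu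 q_i)\wedge \mathrm{d}p_i .$$ Moreover, $\omega_1$ is in Darboux form $$\omega_1=\sum_{a=1}^n \mathrm{d}\Big(\tfrac{k}{4}x_{aa}\Big)\wedge \mathrm{d}\big(-(y^{-1})_{aa}\big)+\sum_{1\le a<b\le n}\mathrm{d}\Big(\tfrac{k}{2}x_{ab}\Big)\wedge \mathrm{d}\big(-(y^{-1})_{ab}\big),$$ so that $\omega_{\mathcal{X}^J_n}=\sum_{I=1}^{n(n+3)/2}\mathrm{d}Q^I\wedge\mathrm{d}P^I$ with the $n(n+1)/2$ pairs $(Q^I,P^I)$ equal to $(\tfrac{k}{4}x_{aa},-(y^{-1})_{aa})$, $(\tfrac{k}{2}x_{ab},-(y^{-1})_{ab})$ ($a<b$), together with the $n$ pairs $(2\nu q_i,p_i)$.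
   Context: Matrix-valued differential forms are multiplied using matrix multiplication combined with the wedge product of their entries; $\operatorname{tr}$ is the trace; $\bar{\ }$ denotes complex conjugation and $G=(G^t)^t$ is the column of one-forms corresponding to the row $G^t$. The parameters $k$ (with $2k\in\mathbb{N}$) and $\nu>0$ index, respectively, the holomorphic discrete series of $\mathrm{Sp}(n,\mathbb{R})$ and the representations of the Heisenberg group; here they are just positive constants. *)

theory Defs
  imports "HOL-Analysis.Analysis"
begin

text \<open>Points of the real parameter space: (x, y, p, q) with x, y real n x n matrices
  and p, q real 1 x n matrices.  Tangent vectors live in the same vector space.\<close>

type_synonym 'n rpt = "(real^'n^'n) \<times> (real^'n^'n) \<times> (real^'n^1) \<times> (real^'n^1)"

definition xco :: "'n rpt \<Rightarrow> real^'n^'n" where "xco P = fst P"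
definition yco :: "'n rpt \<Rightarrow> real^'n^'n" where "yco P = fst (snd P)"
definition pco :: "'n rpt \<Rightarrow> real^'n^1" where "pco P = fst (snd (snd P))"
definition qco :: "'n rpt \<Rightarrow> real^'n^1" where "qco P = snd (snd (snd P))"

definition symmetric_mat :: "'a^'n^'n \<Rightarrow> bool" where
  "symmetric_mat A \<longleftrightarrow> transpose A = A"

definition pos_def :: "real^'n^'n \<Rightarrow> bool" where
  "pos_def A \<longleftrightarrow> symmetric_mat A \<and> (\<forall>z. z \<noteq> 0 \<longrightarrow> z \<bullet> (A *v z) > 0)"

text \<open>exterior derivative of a (vector/matrix valued) function, as a one-form\<close>
definition dd :: "('v::real_normed_vector \<Rightarrow> 'w::real_normed_vector) \<Rightarrow> 'v \<Rightarrow> 'v \<Rightarrow> 'w" where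
  "dd f P = frechet_derivative f (at P)"

definition wedge :: "('v \<Rightarrow> real) \<Rightarrow> ('v \<Rightarrow> real) \<Rightarrow> 'v \<Rightarrow> 'v \<Rightarrow> real" where
  "wedge a b T1 T2 = a T1 * b T2 - a T2 * b T1"

definition mwedge :: "('v \<Rightarrow> 'a::comm_ring_1^'m^'l) \<Rightarrow> ('v \<Rightarrow> 'a^'k^'m) \<Rightarrow> 'v \<Rightarrow> 'v \<Rightarrow> 'a^'k^'l" where
  "mwedge A B T1 T2 = A T1 ** B T2 - A T2 ** B T1"

definition mcnj :: "complex^'m^'l \<Rightarrow> complex^'m^'l" where
  "mcnj A = (\<chi> i j. cnj (A $ i $ j))"

definition cmat :: "real^'m^'l \<Rightarrow> complex^'m^'l" where
  "cmat A = (\<chi> i j. complex_of_real (A $ i $ j))"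

text \<open>The two-form on the Siegel--Jacobi upper half space at (v,u), evaluated on the
  tangent vectors (V1,U1), (V2,U2) (dv, du evaluate to V, U; conjugates to conj).
  -i omega = k/2 tr(H /\ Hbar) + 2 nu / i tr(G^t D /\ Gbar).\<close>
definition omega_XJ :: "real \<Rightarrow> real \<Rightarrow> (complex^'n^'n) \<times> (complex^'n^1)
    \<Rightarrow> (complex^'n^'n) \<times> (complex^'n^1) \<Rightarrow> (complex^'n^'n) \<times> (complex^'n^1) \<Rightarrow> complex" where
  "omega_XJ k \<nu> vu T1 T2 =
    (let v = fst vu; u = snd vu;
         D = matrix_inv (mcnj v - v);
         p = (u - mcnj u) ** matrix_inv (v - mcnj v);
         H = (\<lambda>T. D ** fst T);
         Hb = (\<lambda>T. mcnj (H T));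
         Gt = (\<lambda>T. snd T - p ** fst T);
         GtD = (\<lambda>T. Gt T ** D);
         Gb = (\<lambda>T. mcnj (transpose (Gt T)))
     in \<i> * (complex_of_real (k/2) * trace (mwedge H Hb T1 T2)
            + (complex_of_real (2*\<nu>) / \<i>) * trace (mwedge GtD Gb T1 T2)))"

definition Phi :: "('n::finite) rpt \<Rightarrow> (complex^'n^'n) \<times> (complex^'n^1)" where
  "Phi P = (let v = (\<chi> i j. Complex (xco P $ i $ j) (yco P $ i $ j)) in (v, cmat (pco P) ** v + cmat (qco P)))"

definition omega_XJ_real :: "real \<Rightarrow> real \<Rightarrow> ('n::finite) rpt \<Rightarrow> 'n rpt \<Rightarrow> 'n rpt \<Rightarrow> complex" where
  "omega_XJ_real k \<nu> P T1 T2 = omega_XJ k \<nu> (Phi P) (dd Phi P T1) (dd Phi P T2)"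

end

theory Submission
  imports Defs
begin

(*
  Then conj v - v = -2 i y, so D = (i/2) y^-1, the row
  (u - conj u) (v - conj v)^-1 is the real row p, and G^t = dp v + dq.  Writing complex
  matrices as pairs of real matrices, the real part of tr (H wedge conj H) cancels by
  cyclicity of the trace and its imaginary part gives tr (y^-1 dx wedge y^-1 dy).  In the
  Heisenberg term the imaginary part cancels because y^-1 is symmetric, while y^-1 y = 1 and
  the symmetry of x reduce the real part to dq wedge dp.  The Darboux form follows from
  d(y^-1) = - y^-1 dy y^-1 and from splitting the trace of a product of two symmetric
  matrices into its diagonal and off-diagonal terms.  Differentiability of the matrix
  inverse comes from Cramer's rule.
*)

lemma matrix_add_rdistrib: "((A::'a::semiring_1^'n^'m) + B) ** C = A ** C + B ** C"
  by (vector matrix_matrix_mult_def sum.distrib[symmetric] field_simps)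

lemma matrix_diff_rdistrib: "((A::'a::ring_1^'n^'m) - B) ** C = A ** C - B ** C"
  by (vector matrix_matrix_mult_def sum_subtractf[symmetric] field_simps)

lemma matrix_diff_ldistrib: "(A::'a::ring_1^'n^'m) ** (B - C) = A ** B - A ** C"
  by (vector matrix_matrix_mult_def sum_subtractf[symmetric] field_simps)

lemma matrix_neg_left: "(- (A::'a::ring_1^'n^'m)) ** B = - (A ** B)"
  by (vector matrix_matrix_mult_def sum_negf[symmetric])

lemma matrix_neg_right: "(A::'a::ring_1^'n^'m) ** (- B) = - (A ** B)"
  by (vector matrix_matrix_mult_def sum_negf[symmetric])

lemma matrix_scaleR_left: "(c *\<^sub>R (A::'a::real_algebra_1^'n^'m)) ** B = c *\<^sub>R (A ** B)"
  by (rule scalar_matrix_assoc[symmetric])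

lemma matrix_scaleR_right: "(A::'a::real_algebra_1^'n^'m) ** (c *\<^sub>R B) = c *\<^sub>R (A ** B)"
  by (simp add: matrix_scalar_ac scalar_matrix_assoc)

lemma trace_scaleR: "trace (c *\<^sub>R (A::real^'n^'n)) = c * trace A"
  by (simp add: trace_def sum_distrib_left)

lemma trace_neg: "trace (- (A::'a::ring_1^'n^'n)) = - trace A"
  by (simp add: trace_def sum_negf)

lemma trace_transpose: "trace (transpose (A::'a::comm_semiring_1^'n^'n)) = trace A"
  by (simp add: trace_def transpose_def)

lemma trace_1x1: "trace (A::'a::comm_semiring_1^1^1) = A $ 1 $ 1"
  by (simp add: trace_def)

lemma double_sum_symmetric:
  fixes f :: "'n::{finite,linorder} \<Rightarrow> 'n \<Rightarrow> 'a::comm_semiring_1"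
  assumes "\<And>a b. f a b = f b a"
  shows "(\<Sum>a\<in>UNIV. \<Sum>b\<in>UNIV. f a b)
    = (\<Sum>a\<in>UNIV. f a a) + 2 * (\<Sum>(a,b)\<in>{(a,b). a < b}. f a b)"
proof -
  let ?L = "{(a,b). a < (b::'n)}" and ?G = "{(a,b). b < (a::'n)}" and ?D = "{(a,b). a = (b::'n)}"
  have "(\<Sum>a\<in>UNIV. \<Sum>b\<in>UNIV. f a b) = (\<Sum>(a,b)\<in>?L \<union> ?G \<union> ?D. f a b)"
    by (simp add: sum.cartesian_product UNIV_Times_UNIV[symmetric] del: UNIV_Times_UNIV)
      (rule sum.cong; auto)
  also have "\<dots> = (\<Sum>(a,b)\<in>?L. f a b) + (\<Sum>(a,b)\<in>?G. f a b) + (\<Sum>(a,b)\<in>?D. f a b)"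
    by (subst sum.union_disjoint, auto)+
  also have "(\<Sum>(a,b)\<in>?G. f a b) = (\<Sum>(a,b)\<in>?L. f a b)"
    by (rule sum.reindex_bij_witness[of _ "\<lambda>(a,b). (b,a)" "\<lambda>(a,b). (b,a)"]) (auto simp: assms)
  also have "(\<Sum>(a,b)\<in>?D. f a b) = (\<Sum>a\<in>UNIV. f a a)"
    by (rule sum.reindex_bij_witness[of _ "\<lambda>a. (a,a)" fst]) auto
  finally show ?thesis by (simp add: mult_2 ac_simps)
qed

lemma symmetric_entry:
  assumes "transpose M = M"
  shows "M $ a $ b = M $ b $ a"
  by (metis assms transpose_def vec_lambda_beta)

lemma trace_mult_symmetric:
  fixes A B :: "'a::comm_semiring_1^('n::{finite,linorder})^('n::{finite,linorder})"
  assumes "transpose A = A" and "transpose B = B"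
  shows "trace (A ** B)
    = (\<Sum>a\<in>UNIV. A $ a $ a * B $ a $ a) + 2 * (\<Sum>(a,b)\<in>{(a,b). a < b}. A $ a $ b * B $ a $ b)"
proof -
  have "trace (A ** B) = (\<Sum>a\<in>UNIV. \<Sum>b\<in>UNIV. A $ a $ b * B $ a $ b)"
    by (simp add: trace_def matrix_matrix_mult_def symmetric_entry[OF assms(2)])
  also have "\<dots> = (\<Sum>a\<in>UNIV. A $ a $ a * B $ a $ a)
      + 2 * (\<Sum>(a,b)\<in>{(a,b). a < b}. A $ a $ b * B $ a $ b)"
    by (rule double_sum_symmetric)
      (simp add: symmetric_entry[OF assms(1)] symmetric_entry[OF assms(2)])
  finally show ?thesis .
qed

lemma matrix_inv_unique:
  fixes A B :: "'a::field^'n^'n"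
  assumes "A ** B = mat 1"
  shows "matrix_inv A = B"
proof -
  have BA: "B ** A = mat 1" using assms matrix_left_right_inverse by blast
  have "A ** matrix_inv A = mat 1 \<and> matrix_inv A ** A = mat 1"
    unfolding matrix_inv_def by (rule someI[of _ B]) (use assms BA in auto)
  then have "B ** (A ** matrix_inv A) = B" by simp
  then show ?thesis by (simp add: matrix_mul_assoc BA)
qed

lemma matrix_inv_right:
  fixes A :: "'a::field^'n^'n"
  assumes "invertible A"
  shows "A ** matrix_inv A = mat 1" and "matrix_inv A ** A = mat 1"
  using assms matrix_inv_unique matrix_left_right_inverse unfolding invertible_def by metis+

lemma matrix_inv_symmetric:
  fixes A :: "'a::field^'n^'n"
  assumes "invertible A" and "transpose A = A"
  shows "transpose (matrix_inv A) = matrix_inv A"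
proof -
  have "A ** transpose (matrix_inv A) = mat 1"
    using arg_cong[OF matrix_inv_right(2)[OF assms(1)], of transpose] assms(2)
    by (simp add: matrix_transpose_mul)
  then show ?thesis by (rule matrix_inv_unique[symmetric])
qed

lemma pos_def_invertible:
  assumes "pos_def (A::real^'n^'n)"
  shows "invertible A"
proof -
  have "inj ((*v) A)"
  proof (rule injI)
    fix u w assume "A *v u = A *v w"
    then have "(u - w) \<bullet> (A *v (u - w)) = 0" by (simp add: matrix_vector_mult_diff_distrib)
    then show "u = w" using assms unfolding pos_def_def by (metis less_irrefl right_minus_eq)
  qed
  then show ?thesis using matrix_left_invertible_injective invertible_left_inverse by blast
qed

section \<open>Complex matrices as pairs of real matrices\<close>

definition complex_mat :: "real^'m^'l \<Rightarrow> real^'m^'l \<Rightarrow> complex^'m^'l" where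
  "complex_mat M N = (\<chi> i j. Complex (M $ i $ j) (N $ i $ j))"

lemma complex_mat_mult:
  "complex_mat M N ** complex_mat M' N' = complex_mat (M ** M' - N ** N') (M ** N' + N ** M')"
  by (simp add: complex_mat_def matrix_matrix_mult_def vec_eq_iff complex_eq_iff Re_sum Im_sum
      sum_subtractf[symmetric] sum.distrib[symmetric])

lemma complex_mat_add: "complex_mat M N + complex_mat M' N' = complex_mat (M + M') (N + N')"
  by (simp add: complex_mat_def vec_eq_iff complex_eq_iff)

lemma complex_mat_diff: "complex_mat M N - complex_mat M' N' = complex_mat (M - M') (N - N')"
  by (simp add: complex_mat_def vec_eq_iff complex_eq_iff)

lemma complex_mat_scaleR: "c *\<^sub>R complex_mat M N = complex_mat (c *\<^sub>R M) (c *\<^sub>R N)"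
  by (simp add: complex_mat_def vec_eq_iff complex_eq_iff)

lemma mcnj_complex_mat: "mcnj (complex_mat M N) = complex_mat M (- N)"
  by (simp add: complex_mat_def mcnj_def vec_eq_iff complex_eq_iff)

lemma complex_mat_diff_mcnj: "complex_mat M N - mcnj (complex_mat M N) = complex_mat 0 (2 *\<^sub>R N)"
  by (simp add: complex_mat_def mcnj_def vec_eq_iff complex_eq_iff)

lemma mcnj_diff_complex_mat: "mcnj (complex_mat M N) - complex_mat M N = complex_mat 0 ((- 2) *\<^sub>R N)"
  by (simp add: complex_mat_def mcnj_def vec_eq_iff complex_eq_iff)

lemma transpose_complex_mat: "transpose (complex_mat M N) = complex_mat (transpose M) (transpose N)"
  by (simp add: complex_mat_def transpose_def vec_eq_iff complex_eq_iff)

lemma cmat_eq_complex_mat: "cmat M = complex_mat M 0"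
  by (simp add: complex_mat_def cmat_def vec_eq_iff complex_eq_iff)

lemma mat_1_eq_complex_mat: "mat 1 = complex_mat (mat 1) 0"
  by (simp add: complex_mat_def mat_def vec_eq_iff complex_eq_iff)

lemma trace_complex_mat: "trace (complex_mat M N) = Complex (trace M) (trace N)"
  by (simp add: complex_mat_def trace_def complex_eq_iff Re_sum Im_sum)

lemma matrix_inv_complex_mat_imaginary:
  fixes N :: "real^'n^'n"
  assumes "invertible N" and "c \<noteq> 0"
  shows "matrix_inv (complex_mat 0 (c *\<^sub>R N)) = complex_mat 0 ((- 1 / c) *\<^sub>R matrix_inv N)"
proof (rule matrix_inv_unique)
  have "(c *\<^sub>R N) ** ((- 1 / c) *\<^sub>R matrix_inv N) = - mat 1"
    using assms
    by (simp add: matrix_neg_right matrix_scaleR_left matrix_scaleR_right matrix_inv_right)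
  then show "complex_mat 0 (c *\<^sub>R N) ** complex_mat 0 ((- 1 / c) *\<^sub>R matrix_inv N) = mat 1"
    by (simp add: complex_mat_mult mat_1_eq_complex_mat)
qed

lemma has_derivative_complex_mat:
  assumes "(f has_derivative f') (at x within S)" and "(g has_derivative g') (at x within S)"
  shows "((\<lambda>x. complex_mat (f x) (g x)) has_derivative (\<lambda>h. complex_mat (f' h) (g' h)))
    (at x within S)"
proof -
  have "linear (\<lambda>z. complex_mat (fst z) (snd z) :: complex^'m^'l)"
    by (rule linearI) (simp_all add: complex_mat_add complex_mat_scaleR)
  then have "bounded_linear (\<lambda>z. complex_mat (fst z) (snd z) :: complex^'m^'l)"
    using linear_conv_bounded_linear by blast
  from bounded_linear.has_derivative[OF this has_derivative_Pair[OF assms]] show ?thesis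
    by simp
qed

section \<open>Derivative of the matrix inverse\<close>

lemma bounded_bilinear_matrix_mult: "bounded_bilinear (\<lambda>(A::real^'n^'m) (B::real^'k^'n). A ** B)"
proof -
  have "bilinear (\<lambda>(A::real^'n^'m) (B::real^'k^'n). A ** B)"
    unfolding bilinear_def
    by (auto intro!: linearI simp: matrix_add_ldistrib matrix_add_rdistrib
        matrix_scaleR_left matrix_scaleR_right)
  then show ?thesis using bilinear_conv_bounded_bilinear by blast
qed

lemmas has_derivative_matrix_mult = bounded_bilinear.FDERIV[OF bounded_bilinear_matrix_mult]

lemma bounded_linear_axis: "bounded_linear (axis i :: 'a::real_normed_vector \<Rightarrow> 'a^'n)"
proof
  show "axis i (x + y) = (axis i x + axis i y :: 'a^'n)" for x y
    by (simp add: vec_eq_iff axis_def)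
  show "axis i (r *\<^sub>R x) = (r *\<^sub>R axis i x :: 'a^'n)" for r x
    by (simp add: vec_eq_iff axis_def)
  have "norm (axis i x :: 'a^'n) \<le> norm x * 1" for x :: 'a
  proof -
    have "norm (axis i x :: 'a^'n) \<le> (\<Sum>j\<in>UNIV. norm (axis i x $ j))"
      by (simp add: norm_vec_def L2_set_le_sum)
    also have "\<dots> = norm x" by (simp add: axis_def if_distrib cong: if_cong)
    finally show ?thesis by simp
  qed
  then show "\<exists>K. \<forall>x. norm (axis i x :: 'a^'n) \<le> norm x * K" by blast
qed

lemma vec_lambda_eq_sum_axis: "(\<chi> i. f i) = (\<Sum>i\<in>UNIV. axis i (f i))"
  by (simp add: vec_eq_iff axis_def sum_component if_distrib cong: if_cong)

lemma has_derivative_vec_lambda: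
  assumes "\<And>i. ((\<lambda>x. f x i) has_derivative f' i) F"
  shows "((\<lambda>x. \<chi> i. f x i) has_derivative (\<lambda>h. \<chi> i. f' i h)) F"
proof -
  have "((\<lambda>x. \<Sum>i\<in>UNIV. axis i (f x i)) has_derivative (\<lambda>h. \<Sum>i\<in>UNIV. axis i (f' i h))) F"
    by (intro has_derivative_sum bounded_linear.has_derivative[OF bounded_linear_axis] assms)
  then show ?thesis by (simp add: vec_lambda_eq_sum_axis[symmetric])
qed

lemma differentiable_vec_lambda:
  assumes "\<And>i. (\<lambda>x. f x i) differentiable F"
  shows "(\<lambda>x. \<chi> i. f x i) differentiable F"
proof -
  from assms obtain f' where "\<And>i. ((\<lambda>x. f x i) has_derivative f' i) F"
    unfolding differentiable_def by metis
  then show ?thesis unfolding differentiable_def by (blast intro: has_derivative_vec_lambda)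
qed

lemma differentiable_prod:
  fixes f :: "'i \<Rightarrow> 'a::real_normed_vector \<Rightarrow> 'b::real_normed_field"
  assumes "\<And>i. f i differentiable (at x within S)"
  shows "(\<lambda>x. \<Prod>i\<in>I. f i x) differentiable (at x within S)"
proof -
  from assms obtain f' where "\<And>i. (f i has_derivative f' i) (at x within S)"
    unfolding differentiable_def by metis
  then show ?thesis unfolding differentiable_def by (blast intro: has_derivative_prod)
qed

lemma differentiable_matrix_entry: "(\<lambda>A::real^'n^'m. A $ i $ j) differentiable F"
  by (intro bounded_linear_imp_differentiable bounded_linear_compose[OF bounded_linear_vec_nth]
      bounded_linear_vec_nth)

lemma differentiable_det:
  assumes "\<And>i j. (\<lambda>x. M x $ i $ j) differentiable (at x within S)"
  shows "(\<lambda>x. det (M x :: real^'n^'n)) differentiable (at x within S)"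
  unfolding det_def
  by (intro differentiable_sum ballI differentiable_mult differentiable_const differentiable_prod
      assms) (simp add: finite_permutations)

lemma open_invertible: "open {A::real^'n^'n. invertible A}"
proof -
  have "continuous_on UNIV (\<lambda>A::real^'n^'n. det A)"
    by (simp add: differentiable_imp_continuous_on differentiable_on_def differentiable_det
        differentiable_matrix_entry)
  then show ?thesis by (simp add: invertible_det_nz open_Collect_neq)
qed

definition cramer_inverse :: "'a::field^'n^'n \<Rightarrow> 'a^'n^'n" where
  "cramer_inverse A = (\<chi> k j. det (\<chi> i l. if l = k then axis j 1 $ i else A $ i $ l) / det A)"

lemma matrix_inv_eq_cramer_inverse:
  fixes A :: "'a::field^'n^'n"
  assumes "det A \<noteq> 0"
  shows "matrix_inv A = cramer_inverse A"
proof -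
  have inv: "invertible A" using assms invertible_det_nz by blast
  have "matrix_inv A $ k $ j = cramer_inverse A $ k $ j" for k j
  proof -
    have "A *v (matrix_inv A *v axis j 1) = axis j 1"
      by (simp add: matrix_vector_mul_assoc matrix_inv_right(1)[OF inv])
    then have "(matrix_inv A *v axis j 1) $ k = cramer_inverse A $ k $ j"
      using cramer[OF assms] by (simp add: cramer_inverse_def)
    moreover have "(matrix_inv A *v axis j 1) $ k = matrix_inv A $ k $ j"
      by (simp add: matrix_vector_mult_def axis_def if_distrib cong: if_cong)
    ultimately show ?thesis by simp
  qed
  then show ?thesis by (simp add: vec_eq_iff)
qed

lemma differentiable_cramer_inverse:
  fixes A :: "real^'n^'n"
  assumes "det A \<noteq> 0"
  shows "cramer_inverse differentiable (at A)"
proof -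
  have entry: "(\<lambda>B::real^'n^'n. if l = k then c else B $ i $ l) differentiable F" for l k c i F
    by (cases "l = k") (simp_all add: differentiable_matrix_entry)
  show ?thesis
    unfolding cramer_inverse_def
  proof (intro differentiable_vec_lambda differentiable_divide)
    show "(\<lambda>B. det (\<chi> i l. if l = k then axis j 1 $ i else B $ i $ l)) differentiable (at A)"
      for k j by (rule differentiable_det) (simp add: entry)
    show "(\<lambda>B. det B) differentiable (at A)"
      by (intro differentiable_det differentiable_matrix_entry)
  qed fact
qed

lemma differentiable_matrix_inv:
  fixes A :: "real^'n^'n"
  assumes "invertible A"
  shows "matrix_inv differentiable (at A)"
proof -
  have "det A \<noteq> 0" using assms invertible_det_nz by blast
  then obtain D where "(cramer_inverse has_derivative D) (at A)"
    using differentiable_cramer_inverse unfolding differentiable_def by blast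
  then have "(matrix_inv has_derivative D) (at A)"
    by (rule has_derivative_transform_within_open[OF _ open_invertible])
      (use assms in \<open>auto simp: invertible_det_nz matrix_inv_eq_cramer_inverse\<close>)
  then show ?thesis unfolding differentiable_def by blast
qed

lemma has_derivative_matrix_inv:
  fixes A :: "real^'n^'n"
  assumes "invertible A"
  shows "(matrix_inv has_derivative (\<lambda>H. - (matrix_inv A ** H ** matrix_inv A))) (at A)"
proof -
  obtain D where D: "(matrix_inv has_derivative D) (at A)"
    using differentiable_matrix_inv[OF assms] unfolding differentiable_def by blast
  \<comment> \<open>differentiate the identity \<open>B ** matrix_inv B = mat 1\<close>, valid near \<open>A\<close>\<close>
  have "((\<lambda>B. B ** matrix_inv B) has_derivative (\<lambda>H. A ** D H + H ** matrix_inv A)) (at A)"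
    using has_derivative_matrix_mult[OF has_derivative_ident D] by simp
  moreover have "((\<lambda>B. B ** matrix_inv B) has_derivative (\<lambda>H. 0)) (at A)"
  proof (rule has_derivative_transform_within_open[OF has_derivative_const[of "mat 1"]
        open_invertible])
    show "mat 1 = B ** matrix_inv B" if "B \<in> {A. invertible A}" for B :: "real^'n^'n"
      using that by (simp add: matrix_inv_right(1))
  qed (use assms in simp)
  ultimately have "(\<lambda>H. A ** D H + H ** matrix_inv A) = (\<lambda>H. 0)"
    by (rule has_derivative_unique)
  then have derivative_zero: "A ** D H + H ** matrix_inv A = 0" for H
    by (rule fun_cong)
  have "D H = - (matrix_inv A ** H ** matrix_inv A)" for H
  proof -
    have "matrix_inv A ** (A ** D H + H ** matrix_inv A) = 0"
      by (simp add: derivative_zero)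
    then have "D H + matrix_inv A ** H ** matrix_inv A = 0"
      by (simp add: matrix_add_ldistrib matrix_mul_assoc matrix_inv_right(2)[OF assms])
    then show ?thesis by (simp add: eq_neg_iff_add_eq_0)
  qed
  then have "D = (\<lambda>H. - (matrix_inv A ** H ** matrix_inv A))" by (rule ext)
  then show ?thesis using D by simp
qed

section \<open>The two-form in the coordinates (x, y, p, q)\<close>

lemmas complex_mat_simps = complex_mat_mult complex_mat_add complex_mat_diff complex_mat_scaleR
  mcnj_complex_mat transpose_complex_mat trace_complex_mat
  matrix_add_ldistrib matrix_add_rdistrib matrix_diff_ldistrib matrix_diff_rdistrib
  matrix_neg_left matrix_neg_right matrix_scaleR_left matrix_scaleR_right
  trace_add trace_sub trace_scaleR trace_neg

lemma trace_wedge_siegel: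
  fixes Y dx1 dy1 dx2 dy2 :: "real^'n^'n"
  defines "D \<equiv> complex_mat 0 ((1/2) *\<^sub>R Y)"
  shows "trace ((D ** complex_mat dx1 dy1) ** mcnj (D ** complex_mat dx2 dy2)
       - (D ** complex_mat dx2 dy2) ** mcnj (D ** complex_mat dx1 dy1))
   = Complex 0 ((1/2) * (trace (Y ** dx2 ** (Y ** dy1)) - trace (Y ** dx1 ** (Y ** dy2))))"
  using trace_mul_sym[of "Y ** dy1" "Y ** dy2"] trace_mul_sym[of "Y ** dx1" "Y ** dx2"]
    trace_mul_sym[of "Y ** dy1" "Y ** dx2"] trace_mul_sym[of "Y ** dy2" "Y ** dx1"]
  unfolding D_def by (simp add: complex_mat_simps matrix_mul_assoc)

lemma trace_row_symmetric:
  fixes u w :: "real^'n^1" and S :: "real^'n^'n"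
  assumes "transpose S = S"
  shows "trace (u ** S ** transpose w) = trace (w ** S ** transpose u)"
  by (metis assms matrix_mul_assoc matrix_transpose_mul trace_transpose transpose_transpose)

lemma trace_wedge_rows:
  fixes a1 b1 a2 b2 :: "real^'n^1" and Y :: "real^'n^'n"
  assumes Y: "transpose Y = Y"
  defines "D \<equiv> complex_mat 0 ((1/2) *\<^sub>R Y)"
  shows "trace ((complex_mat a1 b1 ** D) ** mcnj (transpose (complex_mat a2 b2))
              - (complex_mat a2 b2 ** D) ** mcnj (transpose (complex_mat a1 b1)))
    = Complex (trace (a1 ** Y ** transpose b2) - trace (a2 ** Y ** transpose b1)) 0"
  using trace_row_symmetric[OF Y, of a1 a2] trace_row_symmetric[OF Y, of b1 b2]
    trace_row_symmetric[OF Y, of b1 a2] trace_row_symmetric[OF Y, of b2 a1]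
  unfolding D_def by (simp add: complex_mat_simps matrix_mul_assoc)

lemma trace_rows_heisenberg:
  fixes x y Y :: "real^'n^'n" and dp1 dq1 dp2 dq2 :: "real^'n^1"
  assumes "Y ** y = mat 1" and "transpose x = x" and "transpose y = y"
  shows "trace ((dp1 ** x + dq1) ** Y ** transpose (dp2 ** y))
       - trace ((dp2 ** x + dq2) ** Y ** transpose (dp1 ** y))
    = trace (dq1 ** transpose dp2) - trace (dq2 ** transpose dp1)"
proof -
  have "(a ** Y) ** transpose (dp ** y) = a ** transpose dp" for a dp :: "real^'n^1"
    by (simp add: matrix_transpose_mul assms(3) matrix_mul_assoc[symmetric])
      (simp add: matrix_mul_assoc assms(1))
  then show ?thesis
    using trace_row_symmetric[OF assms(2), of dp1 dp2]
    by (simp add: matrix_add_rdistrib trace_add)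
qed

lemma omega_XJ_complex_mat:
  fixes x y dx1 dy1 dx2 dy2 :: "real^'n^'n" and p q dp1 dq1 dp2 dq2 :: "real^'n^1"
  assumes x: "transpose x = x" and y: "transpose y = y" and "invertible y"
  defines "Y \<equiv> matrix_inv y"
    and "tangent \<equiv> \<lambda>dx dy dp dq. (complex_mat dx dy,
          complex_mat (p ** dx + dp ** x + dq) (p ** dy + dp ** y))"
  shows "omega_XJ k \<nu> (complex_mat x y, complex_mat (p ** x + q) (p ** y))
           (tangent dx1 dy1 dp1 dq1) (tangent dx2 dy2 dp2 dq2)
    = complex_of_real (k/4 * (trace (Y ** dx1 ** (Y ** dy2)) - trace (Y ** dx2 ** (Y ** dy1)))
        + 2*\<nu> * (trace (dq1 ** transpose dp2) - trace (dq2 ** transpose dp1)))"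
proof -
  have yY: "y ** Y = mat 1" and Yy: "Y ** y = mat 1"
    using matrix_inv_right[OF \<open>invertible y\<close>] by (simp_all add: Y_def)
  have Y: "transpose Y = Y"
    unfolding Y_def using matrix_inv_symmetric[OF \<open>invertible y\<close> y] .
  define D where "D = complex_mat 0 ((1/2) *\<^sub>R Y)"
  have D_eq: "matrix_inv (mcnj (complex_mat x y) - complex_mat x y) = D"
    unfolding mcnj_diff_complex_mat D_def Y_def
    using matrix_inv_complex_mat_imaginary[OF \<open>invertible y\<close>, of "- 2"] by simp
  have p_eq: "(complex_mat (p ** x + q) (p ** y) - mcnj (complex_mat (p ** x + q) (p ** y)))
      ** matrix_inv (complex_mat x y - mcnj (complex_mat x y)) = complex_mat p 0"
  proof -
    have "(2 *\<^sub>R (p ** y)) ** ((- 1 / 2) *\<^sub>R Y) = - p"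
      by (simp add: matrix_neg_right matrix_scaleR_left matrix_scaleR_right yY
          matrix_mul_assoc[symmetric])
    then show ?thesis
      unfolding complex_mat_diff_mcnj
      using matrix_inv_complex_mat_imaginary[OF \<open>invertible y\<close>, of 2]
      by (simp add: complex_mat_mult Y_def)
  qed
  have G_eq: "snd (tangent dx dy dp dq) - complex_mat p 0 ** fst (tangent dx dy dp dq)
      = complex_mat (dp ** x + dq) (dp ** y)" for dx dy dp dq
    by (simp add: tangent_def complex_mat_simps)
  have siegel: "trace (mwedge (\<lambda>T. D ** fst T) (\<lambda>T. mcnj (D ** fst T))
      (tangent dx1 dy1 dp1 dq1) (tangent dx2 dy2 dp2 dq2))
    = Complex 0 ((1/2) * (trace (Y ** dx2 ** (Y ** dy1)) - trace (Y ** dx1 ** (Y ** dy2))))"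
    unfolding mwedge_def tangent_def fst_conv D_def by (rule trace_wedge_siegel)
  have heisenberg: "trace (mwedge (\<lambda>T. (snd T - complex_mat p 0 ** fst T) ** D)
      (\<lambda>T. mcnj (transpose (snd T - complex_mat p 0 ** fst T)))
      (tangent dx1 dy1 dp1 dq1) (tangent dx2 dy2 dp2 dq2))
    = Complex (trace (dq1 ** transpose dp2) - trace (dq2 ** transpose dp1)) 0"
    unfolding mwedge_def G_eq D_def trace_wedge_rows[OF Y] trace_rows_heisenberg[OF Yy x y] ..
  show ?thesis
    unfolding omega_XJ_def Let_def fst_conv snd_conv D_eq p_eq siegel heisenberg
    by (simp add: complex_eq_iff field_simps)
qed

lemma dd_eq: "(f has_derivative f') (at P) \<Longrightarrow> dd f P = f'"
  unfolding dd_def by (rule frechet_derivative_at[symmetric])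

lemma has_derivative_matrix_entry [derivative_intros]:
  "(f has_derivative f') F \<Longrightarrow>
    ((\<lambda>x. (f x :: 'a::real_normed_vector^'n^'m) $ i $ j) has_derivative (\<lambda>h. f' h $ i $ j)) F"
  by (intro bounded_linear.has_derivative[OF bounded_linear_vec_nth]
      bounded_linear.has_derivative[OF bounded_linear_vec_nth, of "\<lambda>x. f x $ i"])

lemma bounded_linear_coordinates:
  shows "bounded_linear xco" and "bounded_linear yco" and "bounded_linear pco"
    and "bounded_linear qco"
  unfolding xco_def[abs_def] yco_def[abs_def] pco_def[abs_def] qco_def[abs_def]
  by (intro bounded_linear_intros bounded_linear_fst bounded_linear_snd)+

lemmas has_derivative_coordinates [derivative_intros] =
  bounded_linear_coordinates[THEN bounded_linear_imp_has_derivative]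

lemmas dd_coordinates = has_derivative_coordinates[THEN dd_eq]

lemma Phi_eq_complex_mat:
  "Phi P = (complex_mat (xco P) (yco P), complex_mat (pco P ** xco P + qco P) (pco P ** yco P))"
  by (simp add: Phi_def Let_def complex_mat_def[symmetric] cmat_eq_complex_mat complex_mat_mult
      complex_mat_add)

lemma dd_Phi: "dd Phi P = (\<lambda>T. (complex_mat (xco T) (yco T),
    complex_mat (pco P ** xco T + pco T ** xco P + qco T) (pco P ** yco T + pco T ** yco P)))"
  unfolding Phi_eq_complex_mat[abs_def]
  by (intro dd_eq has_derivative_Pair has_derivative_complex_mat has_derivative_add
      has_derivative_matrix_mult has_derivative_coordinates)

lemma has_derivative_matrix_inv_yco:
  assumes "invertible (yco P)"
  shows "((\<lambda>P'. matrix_inv (yco P')) has_derivative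
    (\<lambda>T. - (matrix_inv (yco P) ** yco T ** matrix_inv (yco P)))) (at P)"
  using has_derivative_compose[OF has_derivative_coordinates(2)
      has_derivative_matrix_inv[OF assms]] .

lemma omega_XJ_real_split:
  fixes P T1 T2 :: "'n::finite rpt"
  assumes "symmetric_mat (xco P)" and "pos_def (yco P)"
  shows "omega_XJ_real k \<nu> P T1 T2 = complex_of_real
    (k/4 * trace (mwedge (\<lambda>T. matrix_inv (yco P) ** dd xco P T)
                         (\<lambda>T. matrix_inv (yco P) ** dd yco P T) T1 T2)
     + 2*\<nu> * (mwedge (dd qco P) (\<lambda>T. transpose (dd pco P T)) T1 T2) $ 1 $ 1)"
proof -
  have "transpose (xco P) = xco P" "transpose (yco P) = yco P" "invertible (yco P)"
    using assms pos_def_invertible unfolding pos_def_def symmetric_mat_def by auto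
  note omega = omega_XJ_complex_mat[OF this, of k \<nu> "pco P" "qco P"]
  show ?thesis
    unfolding omega_XJ_real_def Phi_eq_complex_mat dd_Phi omega mwedge_def dd_coordinates
    by (simp add: trace_sub trace_1x1[symmetric] matrix_mul_assoc)
qed

section \<open>Darboux form\<close>

lemma dd_matrix_inv_yco:
  assumes "invertible (yco P)"
  shows "dd (\<lambda>P'. matrix_inv (yco P')) P
    = (\<lambda>T. - (matrix_inv (yco P) ** yco T ** matrix_inv (yco P)))"
  by (rule dd_eq[OF has_derivative_matrix_inv_yco[OF assms]])

lemma trace_mwedge_dd_matrix_inv:
  assumes "invertible (yco P)"
  shows "trace (mwedge (dd xco P) (dd (\<lambda>P'. matrix_inv (yco P')) P) T1 T2)
    = - trace (mwedge (\<lambda>T. matrix_inv (yco P) ** dd xco P T)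
                      (\<lambda>T. matrix_inv (yco P) ** dd yco P T) T1 T2)"
proof -
  have cyclic: "trace (dx ** (Y ** dy ** Y)) = trace (Y ** dx ** (Y ** dy))"
    for dx dy Y :: "real^'n^'n"
    using trace_mul_sym[of Y "dx ** Y ** dy"] by (simp add: matrix_mul_assoc)
  show ?thesis
    unfolding mwedge_def dd_matrix_inv_yco[OF assms] dd_coordinates
    by (simp add: matrix_neg_right trace_sub trace_neg cyclic)
qed

lemma heisenberg_form_darboux:
  "c * (mwedge (dd qco P) (\<lambda>T. transpose (dd pco P T)) T1 T2) $ 1 $ 1
    = (\<Sum>i\<in>UNIV. wedge (dd (\<lambda>P'. c * qco P' $ 1 $ i) P) (dd (\<lambda>P'. pco P' $ 1 $ i) P) T1 T2)"
proof -
  have "dd (\<lambda>P'. c * qco P' $ 1 $ i) P = (\<lambda>T. c * qco T $ 1 $ i)"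
    and "dd (\<lambda>P'. pco P' $ 1 $ i) P = (\<lambda>T. pco T $ 1 $ i)" for i
    by (intro dd_eq derivative_intros)+
  then show ?thesis
    unfolding mwedge_def wedge_def dd_coordinates
    by (simp add: matrix_matrix_mult_def transpose_def sum_distrib_left sum_subtractf
        algebra_simps)
qed

lemma siegel_form_darboux:
  fixes P T1 T2 :: "'n::{finite,linorder} rpt"
  assumes "invertible (yco P)" and "symmetric_mat (yco P)"
    and "symmetric_mat (xco T1)" "symmetric_mat (yco T1)"
    and "symmetric_mat (xco T2)" "symmetric_mat (yco T2)"
  shows "- k/4 * trace (mwedge (dd xco P) (dd (\<lambda>P'. matrix_inv (yco P')) P) T1 T2)
    = (\<Sum>a\<in>UNIV. wedge (dd (\<lambda>P'. k/4 * xco P' $ a $ a) P)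
                        (dd (\<lambda>P'. - matrix_inv (yco P') $ a $ a) P) T1 T2)
    + (\<Sum>(a,b)\<in>{(a,b). a < b}. wedge (dd (\<lambda>P'. k/2 * xco P' $ a $ b) P)
                        (dd (\<lambda>P'. - matrix_inv (yco P') $ a $ b) P) T1 T2)"
proof -
  define Y where "Y = matrix_inv (yco P)"
  define F where "F T = Y ** yco T ** Y" for T :: "'n rpt"
  have Y: "transpose Y = Y"
    using assms(1,2) matrix_inv_symmetric unfolding Y_def symmetric_mat_def by blast
  have F: "transpose (F T) = F T" if "symmetric_mat (yco T)" for T
    using that Y by (simp add: F_def symmetric_mat_def matrix_transpose_mul matrix_mul_assoc)
  have dd_x: "dd (\<lambda>P'. c * xco P' $ a $ b) P = (\<lambda>T. c * xco T $ a $ b)" for c a b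
    by (intro dd_eq derivative_intros)
  have dd_Y: "dd (\<lambda>P'. - matrix_inv (yco P') $ a $ b) P = (\<lambda>T. F T $ a $ b)" for a b
    using dd_eq[OF has_derivative_minus[OF has_derivative_matrix_entry[OF
          has_derivative_matrix_inv_yco[OF assms(1)]]]]
    by (simp add: F_def Y_def)
  have "- k/4 * trace (mwedge (dd xco P) (dd (\<lambda>P'. matrix_inv (yco P')) P) T1 T2)
      = k/4 * (trace (xco T1 ** F T2) - trace (xco T2 ** F T1))"
    unfolding mwedge_def dd_matrix_inv_yco[OF assms(1)] dd_coordinates F_def Y_def
    by (simp add: matrix_neg_right trace_sub trace_neg algebra_simps)
  also have "\<dots> = (\<Sum>a\<in>UNIV. k/4 * xco T1 $ a $ a * F T2 $ a $ a
                                 - k/4 * xco T2 $ a $ a * F T1 $ a $ a)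
      + (\<Sum>(a,b)\<in>{(a,b). a < b}. k/2 * xco T1 $ a $ b * F T2 $ a $ b
                                   - k/2 * xco T2 $ a $ b * F T1 $ a $ b)"
    using assms(3-6)
    by (simp add: trace_mult_symmetric F symmetric_mat_def sum_distrib_left sum_subtractf
        split_def algebra_simps)
  finally show ?thesis
    unfolding wedge_def dd_x dd_Y .
qed

theorem lemma2:
  fixes k \<nu> :: real and P :: "('n::{finite,linorder}) rpt"
  assumes "k > 0" and "\<nu> > 0"
    and "symmetric_mat (xco P)" and "pos_def (yco P)"
  defines "\<omega>1 \<equiv> (\<lambda>T1 T2. k/4 * trace (mwedge (\<lambda>T. matrix_inv (yco P) ** dd xco P T)
                                            (\<lambda>T. matrix_inv (yco P) ** dd yco P T) T1 T2))"
    and "\<omega>2 \<equiv> (\<lambda>T1 T2. 2*\<nu> * (mwedge (dd qco P) (\<lambda>T. transpose (dd pco P T)) T1 T2) $ 1 $ 1)"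
  shows "\<forall>T1 T2. symmetric_mat (xco T1) \<and> symmetric_mat (yco T1) \<and>
                 symmetric_mat (xco T2) \<and> symmetric_mat (yco T2) \<longrightarrow>
     omega_XJ_real k \<nu> P T1 T2 = complex_of_real (\<omega>1 T1 T2 + \<omega>2 T1 T2)
   \<and> \<omega>1 T1 T2 = - k/4 * trace (mwedge (dd xco P) (dd (\<lambda>P'. matrix_inv (yco P')) P) T1 T2)
   \<and> \<omega>2 T1 T2 = (\<Sum>i\<in>UNIV. wedge (dd (\<lambda>P'. 2*\<nu> * qco P' $ 1 $ i) P)
                                   (dd (\<lambda>P'. pco P' $ 1 $ i) P) T1 T2)
   \<and> \<omega>1 T1 T2 = (\<Sum>a\<in>UNIV. wedge (dd (\<lambda>P'. k/4 * xco P' $ a $ a) P)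
                                   (dd (\<lambda>P'. - matrix_inv (yco P') $ a $ a) P) T1 T2)
              + (\<Sum>(a,b)\<in>{(a,b). a < b}. wedge (dd (\<lambda>P'. k/2 * xco P' $ a $ b) P)
                                   (dd (\<lambda>P'. - matrix_inv (yco P') $ a $ b) P) T1 T2)"
proof -
  have inv: "invertible (yco P)" and sym_y: "symmetric_mat (yco P)"
    using assms(4) pos_def_invertible unfolding pos_def_def by blast+
  have omega: "omega_XJ_real k \<nu> P T1 T2 = complex_of_real (\<omega>1 T1 T2 + \<omega>2 T1 T2)" for T1 T2
    unfolding \<omega>1_def \<omega>2_def by (rule omega_XJ_real_split[OF assms(3,4)])
  have \<omega>1: "\<omega>1 T1 T2 = - k/4 * trace (mwedge (dd xco P) (dd (\<lambda>P'. matrix_inv (yco P')) P) T1 T2)"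
    for T1 T2
    unfolding \<omega>1_def trace_mwedge_dd_matrix_inv[OF inv] by simp
  have \<omega>2: "\<omega>2 T1 T2 = (\<Sum>i\<in>UNIV. wedge (dd (\<lambda>P'. 2*\<nu> * qco P' $ 1 $ i) P)
                                       (dd (\<lambda>P'. pco P' $ 1 $ i) P) T1 T2)" for T1 T2
    unfolding \<omega>2_def by (rule heisenberg_form_darboux)
  show ?thesis
    using siegel_form_darboux[OF inv sym_y] unfolding omega \<omega>1 \<omega>2 by blast
qed

end
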